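(* Let $\kappa$ be an uncountable regular cardinal, let $\mathcal{I}$ be a $\kappa$-complete proper ideal on $\kappa$ containing every bounded subset of $\kappa$, and suppose $\mathcal{I}$ contains an unbounded subset of $\kappa$. Let $\nu\in\{2,\kappa\}$. Then for every $1\le\alpha<\kappa^+$, neither $\boldsymbol{\Sigma}^0_\alpha({}^{\kappa}\nu,\tau_{\mathcal{I}})$ nor $\boldsymbol{\Pi}^0_\alpha({}^{\kappa}\nu,\tau_{\mathcal{I}})$ has a ${}^{\kappa}2$-universal set.
   Context: ${}^{\kappa}\nu$ is the set of functions $\kappa\to\nu$; $\tau_{\mathcal{I}}$ is the topology generated by the sets $\mathbf{N}_f=\{x:f\subseteq x\}$ for $f\colon D\to\nu$ with $D\in\mathcal{I}$. For a topological space $X$: $\boldsymbol{\Sigma}^0_1(X)$ = open sets, $\boldsymbol{\Pi}^0_1(X)$ = closed sets; for $\alpha>1$, $\boldsymbol{\Sigma}^0_\alpha(X)$ consists of unions $\bigcup_{\gamma<\kappa}A_\gamma$ with $A_\gamma\in\bigcup_{1\le\beta<\alpha}\boldsymbol{\Pi}^0_\beta(X)$, and $\boldsymbol{\Pi}^0_\alpha(X)$ the complements of $\boldsymbol{\Sigma}^0_\alpha(X)$ sets. For a class $\boldsymbol{\Gamma}$ and spaces $Y,X$, a set $\mathcal{U}\subseteq Y\times X$ is $Y$-universal for $\boldsymbol{\Gamma}(X)$ if $\mathcal{U}\in\boldsymbol{\Gamma}(Y\times X)$ and $\boldsymbol{\Gamma}(X)=\{\mathcal{U}_y: y\in Y\}$,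 where $\mathcal{U}_y=\{x:(y,x)\in\mathcal{U}\}$. Here $Y={}^{\kappa}2$ and $X=({}^{\kappa}\nu,\tau_{\mathcal{I}})$ (the conclusion holds whatever topology is placed on $Y\times X$). *)

theory Defs
  imports "HOL-Analysis.Analysis"
begin

text \<open>The cardinal kappa is represented by a type 'k with class wellorder whose order type
  is kappa; ordinals below kappa are the elements of 'k.\<close>

definition is_cardinal_type :: "'k::wellorder itself \<Rightarrow> bool" where
  "is_cardinal_type _ \<longleftrightarrow>
     (\<forall>x::'k. (card_of {y. y < x}, card_of (UNIV::'k set)) \<in> ordLess)"

definition regular_type :: "'k::wellorder itself \<Rightarrow> bool" where
  "regular_type _ \<longleftrightarrow>
     (\<forall>A::'k set. (card_of A, card_of (UNIV::'k set)) \<in> ordLess \<longrightarrow> (\<exists>b. \<forall>a\<in>A. a < b))"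

definition bounded_set :: "'k::wellorder set \<Rightarrow> bool" where
  "bounded_set A \<longleftrightarrow> (\<exists>b. \<forall>a\<in>A. a < b)"

definition kappa_complete_proper_ideal :: "'k::wellorder set set \<Rightarrow> bool" where
  "kappa_complete_proper_ideal I \<longleftrightarrow>
     {} \<in> I \<and>
     (\<forall>A B. A \<in> I \<and> B \<subseteq> A \<longrightarrow> B \<in> I) \<and>
     (\<forall>A B. A \<in> I \<and> B \<in> I \<longrightarrow> A \<union> B \<in> I) \<and>
     (\<forall>S. S \<subseteq> I \<and> (card_of S, card_of (UNIV::'k set)) \<in> ordLess \<longrightarrow> \<Union>S \<in> I) \<and>
     UNIV \<notin> I"

text \<open>The topology tau_I on functions kappa \<Rightarrow> nu, generated by the sets N_f,
  f a function D \<rightarrow> nu with D \<in> I (f represented by any total extension).\<close>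
definition tauI :: "'k set set \<Rightarrow> ('k \<Rightarrow> 'v) topology" where
  "tauI I = topology_generated_by {{x. \<forall>d\<in>D. x d = f d} | D f. D \<in> I}"

text \<open>An ordinal alpha with 1 \<le> alpha < kappa^+ is represented by a
  well-order w on a nonempty subset of 'k (of order type alpha); ordinals beta < alpha
  correspond to the initial segments of w.  Level 1 (singleton field) = open sets; for
  alpha > 1 the Sigma sets are unions of kappa-many (indexed by 'k) sets, each in
  Pi_beta for some 1 \<le> beta < alpha.\<close>
inductive borel_sigma :: "'a topology \<Rightarrow> 'k rel \<Rightarrow> 'a set \<Rightarrow> bool" for X where
  level_one: "Well_order w \<Longrightarrow> (\<exists>a. Field w = {a}) \<Longrightarrow> openin X A \<Longrightarrow> borel_sigma X w A"
| union: "Well_order w \<Longrightarrow>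
    (\<forall>i::'k. F i \<subseteq> topspace X \<and>
        (\<exists>a\<in>Field w. underS w a \<noteq> {} \<and>
            borel_sigma X (Restr w (underS w a)) (topspace X - F i))) \<Longrightarrow>
    A = (\<Union>i. F i) \<Longrightarrow> borel_sigma X w A"

definition borel_pi :: "'a topology \<Rightarrow> 'k rel \<Rightarrow> 'a set \<Rightarrow> bool" where
  "borel_pi X w A \<longleftrightarrow> A \<subseteq> topspace X \<and> borel_sigma X w (topspace X - A)"

definition is_universal :: "(('y \<times> 'x) set \<Rightarrow> bool) \<Rightarrow> ('x set \<Rightarrow> bool) \<Rightarrow> ('y \<times> 'x) set \<Rightarrow> bool" where
  "is_universal CY CX U \<longleftrightarrow> CY U \<and> Collect CX = {{x. (y, x) \<in> U} | y. True}"

end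

theory Submission
  imports Defs
begin

text \<open>By regularity an unbounded D \<in> I has size kappa, so there is an injection h from kappa
  into D. Sets depending only on the coordinates in D are clopen in tau_I. Pulling back the
  subsets of kappa\<rightarrow>2 along the surjection x \<mapsto> (\<lambda>i. x (h i) = a1) from kappa\<rightarrow>nu
  therefore gives 2^(2^kappa) distinct clopen sets, and clopen sets belong to every class
  Sigma_alpha and Pi_alpha. A set universal with parameters in kappa\<rightarrow>2 has only 2^kappa
  sections, contradicting Cantor's theorem.\<close>

lemma topspace_tauI:
  assumes "I \<noteq> {}"
  shows "topspace (tauI I) = UNIV"
  using assms unfolding tauI_def by auto

lemma openin_tauI_if_determined:
  assumes D: "D \<in> I"
    and determined: "\<And>x y. x \<in> A \<Longrightarrow> \<forall>d\<in>D. y d = x d \<Longrightarrow> y \<in> A"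
  shows "openin (tauI I) A"
proof -
  have "A = \<Union>{{y. \<forall>d\<in>D. y d = x d} | x. x \<in> A}"
    using determined by auto
  moreover have "generate_topology_on {{x. \<forall>d\<in>D. x d = f d} | D f. D \<in> I}
      (\<Union>{{y. \<forall>d\<in>D. y d = x d} | x. x \<in> A})"
    by (intro generate_topology_on.UN generate_topology_on.Basis) (use D in blast)
  ultimately show ?thesis
    unfolding tauI_def openin_topology_generated_by_iff by simp
qed

lemma (in wo_rel) ex_underS_singleton:
  assumes "Field r \<noteq> {}" and "\<nexists>a. Field r = {a}"
  shows "\<exists>a\<in>Field r. \<exists>m. underS a = {m} \<and> (m, m) \<in> r"
proof -
  define m where "m = minim (Field r)"
  have m: "m \<in> Field r" "\<And>b. b \<in> Field r \<Longrightarrow> (m, b) \<in> r"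
    unfolding m_def using assms(1) by (auto intro: minim_in minim_least)
  have "Field r - {m} \<noteq> {}" using assms(2) m(1) by blast
  define a where "a = minim (Field r - {m})"
  have a: "a \<in> Field r - {m}" "\<And>b. b \<in> Field r - {m} \<Longrightarrow> (a, b) \<in> r"
    unfolding a_def using \<open>Field r - {m} \<noteq> {}\<close>
      minim_in[of "Field r - {m}"] minim_least[of "Field r - {m}"] by auto
  have "underS a = {m}"
  proof
    show "underS a \<subseteq> {m}"
      using a ANTISYM by (force simp: underS_def Field_def antisym_def)
    show "{m} \<subseteq> underS a"
      using a m by (auto simp: underS_def)
  qed
  moreover have "(m, m) \<in> r" using m by blast
  ultimately show ?thesis using a(1) by blast
qed

lemma borel_sigma_if_clopen:
  assumes w: "Well_order w" "Field w \<noteq> {}"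
    and A: "openin X A" "openin X (topspace X - A)"
  shows "borel_sigma X w A"
proof (cases "\<exists>a. Field w = {a}")
  case True
  then show ?thesis using w A by (blast intro: borel_sigma.level_one)
next
  case False
  \<comment> \<open>A is the union of copies of itself, and its open complement has level one below the
    second element a of w, whose initial segment is a singleton.\<close>
  then obtain a m where a: "a \<in> Field w" "underS w a = {m}" "(m, m) \<in> w"
    using wo_rel.ex_underS_singleton[of w] w by (auto simp: wo_rel_def)
  have "Field (Restr w {m}) = {m}" using a(3) by (auto simp: Field_def)
  then have "borel_sigma X (Restr w {m}) (topspace X - A)"
    using w(1) A(2) by (blast intro: borel_sigma.level_one Well_order_Restr)
  then have "borel_sigma X (Restr w (underS w a)) (topspace X - A)"
    using a(2) by simp
  moreover have "A \<subseteq> topspace X" using A(1) openin_subset by blast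
  ultimately have "\<forall>i::'k. A \<subseteq> topspace X \<and> (\<exists>a\<in>Field w. underS w a \<noteq> {} \<and>
      borel_sigma X (Restr w (underS w a)) (topspace X - A))"
    using a by blast
  then show ?thesis by (rule borel_sigma.union[OF w(1)]) simp
qed

lemma borel_pi_if_clopen:
  assumes "Well_order w" "Field w \<noteq> {}" "openin X A" "openin X (topspace X - A)"
  shows "borel_pi X w A"
proof -
  have "topspace X - (topspace X - A) = A" using assms(3) openin_subset by blast
  then show ?thesis
    using assms borel_sigma_if_clopen[of w X "topspace X - A"] openin_subset
    unfolding borel_pi_def by metis
qed

lemma not_universal_if_inj_family:
  fixes F :: "'y set \<Rightarrow> 'x set" and U :: "('y \<times> 'x) set"
  assumes "inj F" and "\<And>S. CX (F S)"
  shows "\<not> is_universal CY CX U"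
proof
  assume "is_universal CY CX U"
  then have "\<forall>S. \<exists>y. F S = {x. (y, x) \<in> U}"
    using assms(2) unfolding is_universal_def by blast
  then obtain g where g: "\<And>S. F S = {x. (g S, x) \<in> U}" by metis
  have "inj g"
  proof (rule injI)
    fix S S' assume "g S = g S'"
    then have "F S = F S'" by (simp add: g)
    then show "S = S'" using \<open>inj F\<close> by (simp add: inj_eq)
  qed
  then have "range (inv g) = Pow UNIV"
    by (metis Pow_UNIV inv_f_f surj_def)
  then show False using Cantors_theorem by blast
qed

lemma surj_eq_comp_inj:
  assumes "inj h" and "a\<^sub>0 \<noteq> a\<^sub>1"
  shows "surj (\<lambda>x i. x (h i) = a\<^sub>1)"
  by (rule surjI[of _ "\<lambda>y d. if y (inv h d) then a\<^sub>1 else a\<^sub>0"]) (use assms in auto)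

lemma inj_vimage_if_surj: "surj f \<Longrightarrow> inj (vimage f)"
  by (metis injI surj_image_vimage_eq)

lemma tauI_no_universal:
  fixes h :: "'i \<Rightarrow> 'k" and a\<^sub>0 :: 'v
    and T :: "(('i \<Rightarrow> bool) \<times> ('k \<Rightarrow> 'v)) topology"
  assumes h: "inj h" "range h \<in> I" and "a\<^sub>0 \<noteq> a\<^sub>1" and w: "Well_order w" "Field w \<noteq> {}"
  shows "\<not> (\<exists>U. is_universal (borel_sigma T w) (borel_sigma (tauI I) w) U) \<and>
         \<not> (\<exists>U. is_universal (borel_pi T w) (borel_pi (tauI I) w) U)"
proof -
  define code where "code x = (\<lambda>i. x (h i) = a\<^sub>1)" for x :: "'k \<Rightarrow> 'v"
  have open_vimage: "openin (tauI I) (code -` S)" for S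
    by (rule openin_tauI_if_determined[OF h(2)]) (auto simp: code_def)
  have "topspace (tauI I) - code -` S = code -` (- S)" for S
    using topspace_tauI[of I] h(2) by auto
  then have clopen: "openin (tauI I) (topspace (tauI I) - code -` S)" for S
    using open_vimage by simp
  have "inj (vimage code)"
    using surj_eq_comp_inj[OF h(1) \<open>a\<^sub>0 \<noteq> a\<^sub>1\<close>]
    by (simp add: inj_vimage_if_surj code_def[abs_def])
  then show ?thesis
    using not_universal_if_inj_family[where CX = "borel_sigma (tauI I) w"]
      not_universal_if_inj_family[where CX = "borel_pi (tauI I) w"]
      borel_sigma_if_clopen[OF w open_vimage clopen] borel_pi_if_clopen[OF w open_vimage clopen]
    by meson
qed

lemma ex_inj_into_unbounded:
  fixes A :: "'k::wellorder set"
  assumes "regular_type TYPE('k)" and "\<not> bounded_set A"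
  shows "\<exists>h::'k \<Rightarrow> 'k. inj h \<and> range h \<subseteq> A"
proof -
  have "\<not> (card_of A, card_of (UNIV::'k set)) \<in> ordLess"
    using assms unfolding regular_type_def bounded_set_def by blast
  then have "(card_of (UNIV::'k set), card_of A) \<in> ordLeq"
    using not_ordLess_iff_ordLeq card_of_Well_order by blast
  then show ?thesis by (simp add: card_of_ordLeq[symmetric])
qed

theorem proposition4p10:
  fixes I :: "'k::wellorder set set"
  assumes "is_cardinal_type TYPE('k)"
    and "\<not> countable (UNIV::'k set)"
    and "regular_type TYPE('k)"
    and "kappa_complete_proper_ideal I"
    and "\<forall>A. bounded_set A \<longrightarrow> A \<in> I"
    and "\<exists>A\<in>I. \<not> bounded_set A"
  shows "\<forall>w::'k rel. Well_order w \<and> Field w \<noteq> {} \<longrightarrow>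
     (\<forall>T::(('k \<Rightarrow> bool) \<times> ('k \<Rightarrow> bool)) topology. topspace T = UNIV \<longrightarrow>
        \<not> (\<exists>U. is_universal (borel_sigma T w) (borel_sigma (tauI I) w) U) \<and>
        \<not> (\<exists>U. is_universal (borel_pi T w) (borel_pi (tauI I) w) U)) \<and>
     (\<forall>T::(('k \<Rightarrow> bool) \<times> ('k \<Rightarrow> 'k)) topology. topspace T = UNIV \<longrightarrow>
        \<not> (\<exists>U. is_universal (borel_sigma T w) (borel_sigma (tauI I) w) U) \<and>
        \<not> (\<exists>U. is_universal (borel_pi T w) (borel_pi (tauI I) w) U))"
proof -
  obtain A where A: "A \<in> I" "\<not> bounded_set A" using assms(6) by blast
  then obtain h :: "'k \<Rightarrow> 'k" where h: "inj h" "range h \<subseteq> A"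
    using ex_inj_into_unbounded assms(3) by blast
  have "\<forall>A B. A \<in> I \<and> B \<subseteq> A \<longrightarrow> B \<in> I"
    using assms(4) unfolding kappa_complete_proper_ideal_def by (elim conjE)
  then have hI: "range h \<in> I" using A(1) h(2) by simp
  have "infinite (UNIV :: 'k set)" using assms(2) countable_finite by blast
  then obtain b :: 'k where "undefined \<noteq> b"
    using ex_new_if_finite[of "{undefined}"] by (metis finite.emptyI finite_insert singletonI)
  show ?thesis
    using tauI_no_universal[OF h(1) hI, of False True]
      tauI_no_universal[OF h(1) hI \<open>undefined \<noteq> b\<close>]
    by blast
qed

end
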